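(* Assume (H1) and let $\alpha\in(0,2)$. There exists a constant $C_1>0$ such that for any $\theta>1/d$ there is a $[1,\infty]$-valued random variable $R_0$, finite $\mathbb P$-a.s., such that for $\mathbb P$-a.e. $\omega$, all $f:\mathbb Z^d\to\mathbb R$, all $R>R_0(\omega)$, all $y\in B_R$ and all $r\in[\log^\theta R,\,R]$, $$\frac{1}{\mu(B_r(y))}\sum_{x\in B_r(y)}f(x)^2-\Big(\frac{1}{\mu(B_r(y))}\sum_{x\in B_r(y)}f(x)\Big)^2\le C_1\,r^{\alpha-d}\,\mathscr E^\omega_{B_r(y)}(f,f).$$
   Context: Assumption (H1): on a probability space $(\Omega,\mathcal F,\mathbb P)$, $\{w_{x,y}\}$, indexed by unordered pairs of distinct points of $\mathbb Z^d$, are i.i.d. non-negative random variables with $w_{x,y}=w_{y,x}$, $\mathbb E[w_{x,y}]=1$ and $w_{x,y}\le M$ for a constant $M>0$. $\mu$ is counting measure on $\mathbb Z^d$, $B_R(y)=(y+(-R,R]^d)\cap\mathbb Z^d$, $B_R=B_R(0)$. For finite $U\subset\mathbb Z^d$ and $f:U\to\mathbb R$, $\mathscr E^\omega_U(f,f)=\frac12\sum_{x,y\in U,\,x\neq y}(f(x)-f(y))^2\frac{w_{x,y}(\omega)}{|x-y|^{d+\alpha}}$. *)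

theory Defs
  imports "HOL-Probability.Probability"
begin

text \<open>Points of Z^d are modelled as int^'d, with d = CARD('d).\<close>

text \<open>Unordered pairs of distinct points of Z^d (the index set of the conductances).\<close>
definition upairs :: "(int^'d) set set" where
  "upairs = {{x, y} | x y. x \<noteq> y}"

definition zdist :: "int^'d \<Rightarrow> int^'d \<Rightarrow> real" where
  "zdist x y = sqrt (\<Sum>i\<in>UNIV. (real_of_int (x$i - y$i))^2)"

definition zbox :: "real \<Rightarrow> int^'d \<Rightarrow> (int^'d) set" where
  "zbox R y = {x. \<forall>i. - R < real_of_int (x$i - y$i) \<and> real_of_int (x$i - y$i) \<le> R}"

definition energy ::
  "(int^'d) set \<Rightarrow> ((int^'d) set \<Rightarrow> 'a \<Rightarrow> real) \<Rightarrow> 'a \<Rightarrow> real \<Rightarrow> (int^'d \<Rightarrow> real) \<Rightarrow> real" where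
  "energy U W \<omega> \<alpha> f = (1/2) * (\<Sum>x\<in>U. \<Sum>y\<in>U - {x}.
      (f x - f y)^2 * W {x, y} \<omega> / zdist x y powr (real CARD('d) + \<alpha>))"

end

theory Submission
  imports Defs "HOL-Real_Asymp.Real_Asymp"
begin

(*
  Call a bond heavy if its conductance is at least 1/2. Conductances are bounded by M and have
  mean 1, so a bond is heavy with probability at least 1/(2M), and two points x, y of a box S
  have in expectation at least (|S| - 2)/(2M)^2 common heavy neighbours z. The indicators for
  different z involve disjoint bonds, so by Hoeffding's inequality the probability that some
  pair of S has fewer than |S|/(16 M^2) of them is at most |S|^2 exp(-c |S|).
  Off this event, (f x - f y)^2 <= 2 (f x - f z)^2 + 2 (f z - f y)^2 averaged over the common
  heavy neighbours z bounds the empirical variance on S by the energy, with a factor of order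
  (diam S)^(d+alpha) / |S|^2, i.e. r^(alpha-d) for a box of radius r.
  Boxes of radius at least (log n)^theta with theta d > 1 have exp(-c r^d) <= n^(-K) for every K,
  so the union bound over the polynomially many boxes at scale n is summable in n, and
  Borel-Cantelli yields the random threshold R0.
*)

section \<open>Lattice boxes\<close>

definition lattice_box :: "int \<Rightarrow> int \<Rightarrow> int^'d \<Rightarrow> (int^'d) set" where
  "lattice_box l u y = {x. \<forall>i. l \<le> x$i - y$i \<and> x$i - y$i \<le> u}"

lemma bij_betw_lattice_box:
  "bij_betw vec_lambda (PiE UNIV (\<lambda>i. {y$i + l .. y$i + u})) (lattice_box l u y)"
proof -
  have mem: "x \<in> lattice_box l u y \<longleftrightarrow> (\<forall>i. x$i \<in> {y$i + l .. y$i + u})" for x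
    unfolding lattice_box_def by (auto simp: algebra_simps)
  show ?thesis
    by (rule bij_betwI[of _ _ _ vec_nth]) (auto simp: mem PiE_iff vec_eq_iff)
qed

lemma finite_lattice_box: "finite (lattice_box l u y)"
  using bij_betw_finite[OF bij_betw_lattice_box] by (simp add: finite_PiE)

lemma card_lattice_box: "card (lattice_box l u (y::int^'d)) = nat (u - l + 1) ^ CARD('d)"
  using bij_betw_same_card[OF bij_betw_lattice_box[of y l u]] by (simp add: card_PiE)

lemma zbox_eq_lattice_box: "zbox r y = lattice_box (1 - \<lceil>r\<rceil>) \<lfloor>r\<rfloor> y"
proof -
  have "(- r < real_of_int k \<and> real_of_int k \<le> r) \<longleftrightarrow> (1 - \<lceil>r\<rceil> \<le> k \<and> k \<le> \<lfloor>r\<rfloor>)" for k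
    using le_floor_iff[of k r] less_ceiling_iff[of "-k" r] by auto
  then show ?thesis
    unfolding zbox_def lattice_box_def by (simp only:)
qed

lemma finite_zbox: "finite (zbox r y)"
  by (simp add: zbox_eq_lattice_box finite_lattice_box)

lemma card_zbox: "card (zbox r (y::int^'d)) = nat (\<lfloor>r\<rfloor> + \<lceil>r\<rceil>) ^ CARD('d)"
  by (simp add: zbox_eq_lattice_box card_lattice_box)

lemma power_le_card_zbox:
  assumes "0 \<le> r"
  shows "r ^ CARD('d) \<le> real (card (zbox r (y::int^'d)))"
proof -
  have "0 \<le> real_of_int \<lfloor>r\<rfloor>"
    using assms by simp
  then have "r \<le> real_of_int (\<lfloor>r\<rfloor> + \<lceil>r\<rceil>)"
    unfolding of_int_add using le_of_int_ceiling[of r] by linarith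
  then have "r \<le> real (nat (\<lfloor>r\<rfloor> + \<lceil>r\<rceil>))"
    by linarith
  then show ?thesis
    unfolding card_zbox using assms by (simp add: power_mono)
qed

lemma zbox_mono:
  assumes "r \<le> s"
  shows "zbox r y \<subseteq> zbox s y"
  unfolding zbox_def
proof (intro subsetI CollectI allI)
  fix x i
  assume "x \<in> {x. \<forall>i. - r < real_of_int (x$i - y$i) \<and> real_of_int (x$i - y$i) \<le> r}"
  then have "- r < real_of_int (x$i - y$i) \<and> real_of_int (x$i - y$i) \<le> r" by blast
  with assms show "- s < real_of_int (x$i - y$i) \<and> real_of_int (x$i - y$i) \<le> s" by linarith
qed

lemma zdist_pos: "x \<noteq> y \<Longrightarrow> 0 < zdist x y"
proof -
  assume "x \<noteq> y"
  then obtain i where "x$i \<noteq> y$i" by (auto simp: vec_eq_iff)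
  then have "0 < (real_of_int (x$i - y$i))^2" by simp
  also have "\<dots> \<le> (\<Sum>j\<in>UNIV. (real_of_int (x$j - y$j))^2)"
    by (rule member_le_sum) auto
  finally show ?thesis unfolding zdist_def by simp
qed

lemma zdist_le_zbox:
  fixes x y z :: "int^'d"
  assumes "x \<in> zbox r y" "z \<in> zbox r y"
  shows "zdist x z \<le> 2 * r * sqrt (real CARD('d))"
proof -
  have coord: "\<bar>real_of_int (x$i - z$i)\<bar> \<le> 2 * r" for i
  proof -
    have "- r < real_of_int (x$i - y$i)" "real_of_int (x$i - y$i) \<le> r"
      "- r < real_of_int (z$i - y$i)" "real_of_int (z$i - y$i) \<le> r"
      using assms unfolding zbox_def by auto
    then show ?thesis unfolding of_int_diff abs_le_iff by linarith
  qed
  have r: "0 \<le> r"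
    using order_trans[OF abs_ge_zero coord] by simp
  have "(real_of_int (x$i - z$i))^2 \<le> (2 * r)^2" for i
    using power_mono[OF coord abs_ge_zero, where n=2] by simp
  then have "(\<Sum>i\<in>UNIV. (real_of_int (x$i - z$i))^2) \<le> (\<Sum>i\<in>(UNIV::'d set). (2 * r)^2)"
    by (rule sum_mono)
  also have "\<dots> = (2 * r * sqrt (real CARD('d)))^2"
    by (simp add: power_mult_distrib)
  finally show ?thesis
    unfolding zdist_def using r by (intro real_le_lsqrt) simp_all
qed

(* A finite family containing every box zbox r y with m \<le> r \<le> n + 1 centred in zbox (n + 1) 0:
   take a = floor r and b = ceiling r - floor r. *)
definition box_family :: "int \<Rightarrow> nat \<Rightarrow> (int^'d) set set" where
  "box_family m n = (\<lambda>(a, b, y). lattice_box (1 - a - b) a y)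
     ` ({m .. int n + 1} \<times> {0, 1} \<times> zbox (real n + 1) 0)"

lemma finite_box_family: "finite (box_family m n)"
  unfolding box_family_def by (intro finite_imageI finite_cartesian_product finite_zbox) auto

lemma card_box_family_le:
  assumes "0 \<le> m"
  shows "real (card (box_family m n :: (int^'d) set set)) \<le> real (2 * n + 3) ^ (CARD('d) + 2)"
proof -
  define T where "T = 2 * n + 3"
  have "card (zbox (real n + 1) (0::int^'d)) = (2 * n + 2) ^ CARD('d)"
    unfolding card_zbox by (simp add: nat_add_distrib nat_mult_distrib)
  then have "card (zbox (real n + 1) (0::int^'d)) \<le> T ^ CARD('d)"
    unfolding T_def by (simp add: power_mono)
  moreover have "card {m .. int n + 1} \<le> T"
    using assms unfolding T_def by simp
  ultimately have "card ({m .. int n + 1} \<times> {0::int, 1} \<times> zbox (real n + 1) (0::int^'d))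
      \<le> T * (2 * T ^ CARD('d))"
    by (simp add: card_cartesian_product mult_le_mono)
  also have "\<dots> \<le> T * (T * T ^ CARD('d))"
    unfolding T_def by (intro mult_le_mono) auto
  finally have "card (box_family m n :: (int^'d) set set) \<le> T ^ (CARD('d) + 2)"
    unfolding box_family_def
    by (intro card_image_le[THEN order_trans])
      (auto simp: power_add power2_eq_square mult_ac finite_zbox)
  then show ?thesis
    unfolding T_def by (metis of_nat_le_iff of_nat_power)
qed

lemma card_mem_box_family:
  assumes "S \<in> box_family m n" "0 \<le> m"
  shows "real_of_int m ^ CARD('d) \<le> real (card (S :: (int^'d) set))"
    and "real (card S) \<le> real (2 * n + 3) ^ CARD('d)"
proof -
  obtain t where t: "t \<in> {m .. int n + 1} \<times> {0, 1} \<times> zbox (real n + 1) 0"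
    and "S = (\<lambda>(a, b, y). lattice_box (1 - a - b) a y) t"
    using assms(1) unfolding box_family_def by blast
  moreover obtain a b y where "t = (a, b, y)"
    using prod_cases3 by blast
  ultimately have S: "S = lattice_box (1 - a - b) a y"
    and a: "m \<le> a" "a \<le> int n + 1" and b: "b \<in> {0, 1}"
    by auto
  have card: "real (card S) = real (nat (2 * a + b)) ^ CARD('d)"
    unfolding S card_lattice_box by simp
  show "real_of_int m ^ CARD('d) \<le> real (card S)"
    unfolding card using a b assms(2) by (intro power_mono) auto
  show "real (card S) \<le> real (2 * n + 3) ^ CARD('d)"
    unfolding card using a b assms(2) by (intro power_mono) auto
qed

lemma zbox_mem_box_family:
  assumes "real_of_int m \<le> r" "r \<le> real n + 1" "y \<in> zbox (real n + 1) 0"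
  shows "zbox r y \<in> box_family m n"
proof -
  have "\<lceil>r\<rceil> - \<lfloor>r\<rfloor> = 0 \<or> \<lceil>r\<rceil> - \<lfloor>r\<rfloor> = 1"
    using ceiling_diff_floor_le_1[of r] floor_le_ceiling[of r] by linarith
  moreover have "m \<le> \<lfloor>r\<rfloor>" "\<lfloor>r\<rfloor> \<le> int n + 1"
    using assms(1,2) by (simp_all add: le_floor_iff floor_le_iff)
  ultimately show ?thesis
    unfolding box_family_def zbox_eq_lattice_box[of r y] using assms(3)
    by (intro image_eqI[where x="(\<lfloor>r\<rfloor>, \<lceil>r\<rceil> - \<lfloor>r\<rfloor>, y)"]) auto
qed

lemma zbox_mem_box_family_at_scale:
  fixes y :: "int^'d"
  assumes "3 < R" "0 < \<theta>" "y \<in> zbox R 0" "ln R powr \<theta> \<le> r" "r \<le> R"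
  shows "zbox r y \<in> box_family \<lfloor>ln (real (nat \<lfloor>R\<rfloor>)) powr \<theta>\<rfloor> (nat \<lfloor>R\<rfloor>)"
proof (rule zbox_mem_box_family)
  have "real (nat \<lfloor>R\<rfloor>) = real_of_int \<lfloor>R\<rfloor>"
    using assms(1) by simp
  then have n: "real (nat \<lfloor>R\<rfloor>) \<le> R" "R \<le> real (nat \<lfloor>R\<rfloor>) + 1" "1 \<le> real (nat \<lfloor>R\<rfloor>)"
    using assms(1) by linarith+
  then have "ln (real (nat \<lfloor>R\<rfloor>)) powr \<theta> \<le> ln R powr \<theta>"
    using assms(2) by (intro powr_mono2) auto
  then show "real_of_int \<lfloor>ln (real (nat \<lfloor>R\<rfloor>)) powr \<theta>\<rfloor> \<le> r"
    using assms(4) by linarith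
  show "r \<le> real (nat \<lfloor>R\<rfloor>) + 1"
    using n assms(5) by linarith
  show "y \<in> zbox (real (nat \<lfloor>R\<rfloor>) + 1) 0"
    using zbox_mono[OF n(2)] assms(3) by blast
qed

lemma one_le_log_scale:
  fixes R :: real
  assumes "3 < R" "0 < \<theta>" "ln R powr \<theta> \<le> r"
  shows "1 \<le> r"
proof -
  have "exp 1 < R"
    using exp_le assms(1) by linarith
  then have "1 < ln R"
    using ln_less_cancel_iff[of "exp 1" R] assms(1) by simp
  then have "1 \<le> ln R powr \<theta>"
    using assms(2) by (intro ge_one_powr_ge_zero) auto
  then show ?thesis
    using assms(3) by linarith
qed

lemma eventually_log_scale_tail:
  fixes \<theta> c :: real and d K :: nat
  assumes "0 < c" "1 < \<theta> * real d"
  shows "eventually (\<lambda>n. 4 \<le> \<lfloor>ln (real n) powr \<theta>\<rfloor> \<and>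
           real (2 * n + 3) ^ K * exp (- c * real_of_int \<lfloor>ln (real n) powr \<theta>\<rfloor> ^ d)
             \<le> inverse (real n ^ 2)) sequentially"
proof -
  have "0 < \<theta>"
    using assms(2) mult_nonpos_nonneg[of \<theta> "real d"] by fastforce
  have tail: "(\<lambda>n. real (2 * n + 3) ^ K * exp (- c' * ln (real n) powr a))
      \<in> o[sequentially](\<lambda>n. inverse (real n ^ 2))" if "0 < c'" "1 < a" for c' a :: real
    using that by real_asymp
  have "filterlim (\<lambda>n. ln (real n) powr \<theta>) at_top sequentially"
    using \<open>0 < \<theta>\<close> by real_asymp
  then have "eventually (\<lambda>n. 5 \<le> ln (real n) powr \<theta>) sequentially"
    by (simp add: filterlim_at_top)
  moreover have "eventually (\<lambda>n.
      norm (real (2 * n + 3) ^ K * exp (- (c / 2 ^ d) * ln (real n) powr (\<theta> * real d)))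
        \<le> 1 * norm (inverse (real n ^ 2))) sequentially"
    using assms by (intro landau_o.smallD[OF tail]) auto
  ultimately show ?thesis
  proof eventually_elim
    case (elim n)
    define t where "t = ln (real n) powr \<theta>"
    define m where "m = real_of_int \<lfloor>t\<rfloor>"
    have "ln (real n) \<noteq> 0"
      using elim(1) by auto
    moreover have "0 \<le> ln (real n)"
      by (cases "n = 0") auto
    ultimately have "0 < ln (real n)"
      by linarith
    have "t / 2 \<le> m"
      using elim(1) unfolding t_def m_def by linarith
    then have "(t / 2) ^ d \<le> m ^ d"
      using elim(1) unfolding t_def by (intro power_mono) auto
    moreover have "(t / 2) ^ d = ln (real n) powr (\<theta> * real d) / 2 ^ d"
      unfolding t_def using \<open>0 < ln (real n)\<close>
      by (simp add: power_divide powr_realpow[symmetric] powr_powr)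
    ultimately have "c / 2 ^ d * ln (real n) powr (\<theta> * real d) \<le> c * m ^ d"
      using assms(1) by (simp add: field_simps)
    then have "real (2 * n + 3) ^ K * exp (- c * m ^ d)
        \<le> real (2 * n + 3) ^ K * exp (- (c / 2 ^ d) * ln (real n) powr (\<theta> * real d))"
      by (intro mult_left_mono) auto
    also have "\<dots> \<le> inverse (real n ^ 2)"
      using elim(2) by simp
    finally show ?case
      using elim(1) unfolding m_def t_def by linarith
  qed
qed

section \<open>A deterministic Poincare inequality\<close>

definition common_heavy_neighbours ::
    "((int^'d) set \<Rightarrow> 'a \<Rightarrow> real) \<Rightarrow> 'a \<Rightarrow> (int^'d) set \<Rightarrow> int^'d \<Rightarrow> int^'d \<Rightarrow> real" where
  "common_heavy_neighbours W \<omega> S x y =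
     (\<Sum>z\<in>S - {x, y}. indicator {1/2..} (W {x, z} \<omega>) * indicator {1/2..} (W {z, y} \<omega>))"

definition bond_energy ::
    "((int^'d) set \<Rightarrow> 'a \<Rightarrow> real) \<Rightarrow> 'a \<Rightarrow> real \<Rightarrow> (int^'d \<Rightarrow> real) \<Rightarrow> int^'d \<Rightarrow> int^'d \<Rightarrow> real" where
  "bond_energy W \<omega> \<alpha> f x z = (f x - f z)^2 * W {x, z} \<omega> / zdist x z powr (real CARD('d) + \<alpha>)"

lemma energy_eq_sum_bond_energy:
  "energy U W \<omega> \<alpha> f = (1/2) * (\<Sum>x\<in>U. \<Sum>z\<in>U - {x}. bond_energy W \<omega> \<alpha> f x z)"
  unfolding energy_def bond_energy_def ..

lemma bond_energy_nonneg: "0 \<le> W {x, z} \<omega> \<Longrightarrow> 0 \<le> bond_energy W \<omega> \<alpha> f x z"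
  unfolding bond_energy_def by simp

lemma energy_nonneg:
  assumes "\<And>x z. x \<in> U \<Longrightarrow> z \<in> U \<Longrightarrow> x \<noteq> z \<Longrightarrow> 0 \<le> W {x, z} \<omega>"
  shows "0 \<le> energy U W \<omega> \<alpha> f"
  unfolding energy_eq_sum_bond_energy using assms
  by (intro mult_nonneg_nonneg sum_nonneg bond_energy_nonneg) auto

definition empirical_variance :: "'b set \<Rightarrow> ('b \<Rightarrow> real) \<Rightarrow> real" where
  "empirical_variance S f = (\<Sum>x\<in>S. (f x)^2) / real (card S) - ((\<Sum>x\<in>S. f x) / real (card S))^2"

lemma empirical_variance_eq_sum_sq_diff:
  fixes f :: "'b \<Rightarrow> real"
  assumes "finite S" "S \<noteq> {}"
  shows "empirical_variance S f = (\<Sum>x\<in>S. \<Sum>y\<in>S - {x}. (f x - f y)^2) / (2 * (real (card S))^2)"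
proof -
  define N where "N = real (card S)"
  have N: "N > 0" using assms by (simp add: N_def card_gt_0_iff)
  have "(\<Sum>x\<in>S. \<Sum>y\<in>S - {x}. (f x - f y)^2) = (\<Sum>x\<in>S. \<Sum>y\<in>S. (f x - f y)^2)"
    using assms(1) by (intro sum.cong[OF refl]) (simp add: sum_diff1)
  also have "\<dots> = (\<Sum>x\<in>S. \<Sum>y\<in>S. (f x)^2 + (f y)^2 - 2 * (f x * f y))"
    by (simp add: power2_diff algebra_simps)
  also have "\<dots> = (\<Sum>x\<in>S. N * (f x)^2 + (\<Sum>y\<in>S. (f y)^2) - 2 * (f x * (\<Sum>y\<in>S. f y)))"
    by (simp add: sum.distrib sum_subtractf sum_distrib_left N_def)
  also have "\<dots> = 2 * N * (\<Sum>x\<in>S. (f x)^2) - 2 * (\<Sum>x\<in>S. f x)^2"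
    by (simp add: sum.distrib sum_subtractf sum_distrib_left sum_distrib_right N_def
        power2_eq_square algebra_simps)
  finally have sq_diff: "(\<Sum>x\<in>S. \<Sum>y\<in>S - {x}. (f x - f y)^2)
      = 2 * N * (\<Sum>x\<in>S. (f x)^2) - 2 * (\<Sum>x\<in>S. f x)^2" .
  have "A / N - (B / N)^2 = (2 * N * A - 2 * B^2) / (2 * N^2)" for A B
    using N by (simp add: field_simps power2_eq_square)
  then show ?thesis
    unfolding empirical_variance_def sq_diff N_def[symmetric] .
qed

lemma sum_offdiag_add:
  fixes e :: "'b \<Rightarrow> real"
  assumes "finite S"
  shows "(\<Sum>x\<in>S. \<Sum>y\<in>S - {x}. e x + e y) = 2 * (real (card S) - 1) * sum e S"
proof -
  have "(\<Sum>y\<in>S - {x}. e x + e y) = (real (card S) - 1) * e x + (sum e S - e x)" if "x \<in> S" for x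
  proof -
    have "real (card (S - {x})) = real (card S) - 1"
      using card.remove[OF assms that] by simp
    moreover have "sum e (S - {x}) = sum e S - e x"
      using assms that by (simp add: sum_diff1)
    ultimately show ?thesis
      by (simp add: sum.distrib)
  qed
  then have "(\<Sum>x\<in>S. \<Sum>y\<in>S - {x}. e x + e y) = (\<Sum>x\<in>S. (real (card S) - 1) * e x + (sum e S - e x))"
    by (rule sum.cong[OF refl])
  also have "\<dots> = (real (card S) - 1) * sum e S + (real (card S) * sum e S - sum e S)"
    by (simp add: sum.distrib sum_subtractf sum_distrib_left)
  also have "\<dots> = 2 * (real (card S) - 1) * sum e S"
    by (simp add: algebra_simps)
  finally show ?thesis .
qed

lemma heavy_bond_le_bond_energy:
  fixes x z :: "int^'d"
  assumes "x \<noteq> z" "0 \<le> W {x, z} \<omega>" "zdist x z \<le> D" "0 < \<alpha>"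
  shows "indicator {1/2..} (W {x, z} \<omega>) * (f x - f z)^2
       \<le> 2 * D powr (real CARD('d) + \<alpha>) * bond_energy W \<omega> \<alpha> f x z"
proof (cases "1/2 \<le> W {x, z} \<omega>")
  case True
  define s where "s = real CARD('d) + \<alpha>"
  have dist_pos: "0 < zdist x z powr s"
    using zdist_pos[OF assms(1)] by simp
  have "(f x - f z)^2 \<le> 2 * ((f x - f z)^2 * W {x, z} \<omega>)"
    using True mult_left_mono[of 1 "2 * W {x, z} \<omega>" "(f x - f z)^2"] by simp
  also have "\<dots> = 2 * (zdist x z powr s * bond_energy W \<omega> \<alpha> f x z)"
    unfolding bond_energy_def s_def[symmetric] using dist_pos by simp
  also have "\<dots> \<le> 2 * (D powr s * bond_energy W \<omega> \<alpha> f x z)"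
    using assms zdist_pos[OF assms(1)]
    by (intro mult_left_mono mult_right_mono powr_mono2 bond_energy_nonneg) (auto simp: s_def)
  finally show ?thesis
    using True by (simp add: s_def)
next
  case False
  then show ?thesis
    using bond_energy_nonneg[of W x z \<omega> \<alpha> f] assms(2) by simp
qed

lemma sq_diff_le_common_heavy_neighbours:
  fixes x y :: "int^'d"
  assumes "finite S" "x \<in> S" "y \<in> S" "x \<noteq> y"
    and W_nonneg: "\<And>u v. u \<in> S \<Longrightarrow> v \<in> S \<Longrightarrow> u \<noteq> v \<Longrightarrow> 0 \<le> W {u, v} \<omega>"
    and dist: "\<And>u v. u \<in> S \<Longrightarrow> v \<in> S \<Longrightarrow> zdist u v \<le> D"
    and "0 < \<alpha>"
  shows "common_heavy_neighbours W \<omega> S x y * (f x - f y)^2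
       \<le> 4 * D powr (real CARD('d) + \<alpha>)
           * ((\<Sum>z\<in>S - {x}. bond_energy W \<omega> \<alpha> f x z) + (\<Sum>z\<in>S - {y}. bond_energy W \<omega> \<alpha> f y z))"
proof -
  define c where "c = 2 * D powr (real CARD('d) + \<alpha>)"
  define b where "b = bond_energy W \<omega> \<alpha> f"
  define heavy where "heavy u z = indicator {1/2..} (W {u, z} \<omega>) * (f u - f z)^2" for u z
  have c: "0 \<le> c"
    unfolding c_def by simp
  have b_nonneg: "0 \<le> b u z" if "u \<in> S" "z \<in> S" "u \<noteq> z" for u z
    unfolding b_def using W_nonneg[OF that] by (rule bond_energy_nonneg)
  have heavy_le: "heavy u z \<le> c * b u z" if "u \<in> S" "z \<in> S" "u \<noteq> z" for u z
    unfolding heavy_def c_def b_def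
    using heavy_bond_le_bond_energy[where W=W and \<omega>=\<omega> and f=f,
        OF that(3) W_nonneg[OF that] dist[OF that(1,2)] \<open>0 < \<alpha>\<close>] .
  have "common_heavy_neighbours W \<omega> S x y * (f x - f y)^2
      = (\<Sum>z\<in>S - {x, y}.
           indicator {1/2..} (W {x, z} \<omega>) * indicator {1/2..} (W {z, y} \<omega>) * (f x - f y)^2)"
    unfolding common_heavy_neighbours_def by (simp add: sum_distrib_right)
  also have "\<dots> \<le> (\<Sum>z\<in>S - {x, y}. 2 * heavy x z + 2 * heavy y z)"
  proof (rule sum_mono)
    fix z
    have "(f x - f y)^2 \<le> 2 * (f x - f z)^2 + 2 * (f y - f z)^2"
      using sum_squares_ge_zero[of "f x - 2 * f z + f y" 0]
      by (simp add: power2_eq_square algebra_simps)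
    then show "indicator {1/2..} (W {x, z} \<omega>) * indicator {1/2..} (W {z, y} \<omega>) * (f x - f y)^2
        \<le> 2 * heavy x z + 2 * heavy y z"
      unfolding heavy_def by (simp add: insert_commute split: split_indicator)
  qed
  also have "\<dots> \<le> (\<Sum>z\<in>S - {x, y}. 2 * c * b x z + 2 * c * b y z)"
    using heavy_le \<open>x \<in> S\<close> \<open>y \<in> S\<close> by (intro sum_mono add_mono) fastforce+
  also have "\<dots> = 2 * c * ((\<Sum>z\<in>S - {x, y}. b x z) + (\<Sum>z\<in>S - {x, y}. b y z))"
    by (simp add: sum.distrib sum_distrib_left distrib_left)
  also have "\<dots> \<le> 2 * c * ((\<Sum>z\<in>S - {x}. b x z) + (\<Sum>z\<in>S - {y}. b y z))"
    using c b_nonneg \<open>finite S\<close> \<open>x \<in> S\<close> \<open>y \<in> S\<close>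
    by (intro mult_left_mono add_mono sum_mono2) auto
  finally show ?thesis
    unfolding c_def b_def by simp
qed

theorem poincare_of_common_heavy_neighbours:
  fixes S :: "(int^'d) set"
  assumes "finite S" "S \<noteq> {}"
    and W_nonneg: "\<And>u v. u \<in> S \<Longrightarrow> v \<in> S \<Longrightarrow> u \<noteq> v \<Longrightarrow> 0 \<le> W {u, v} \<omega>"
    and many: "\<And>x y. x \<in> S \<Longrightarrow> y \<in> S \<Longrightarrow> x \<noteq> y
                 \<Longrightarrow> \<kappa> * real (card S) \<le> common_heavy_neighbours W \<omega> S x y"
    and dist: "\<And>u v. u \<in> S \<Longrightarrow> v \<in> S \<Longrightarrow> zdist u v \<le> D"
    and "0 < \<kappa>" "0 < \<alpha>"
  shows "empirical_variance S f
       \<le> 8 * D powr (real CARD('d) + \<alpha>) / (\<kappa> * (real (card S))^2) * energy S W \<omega> \<alpha> f"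
proof -
  define N where "N = real (card S)"
  define c where "c = 4 * D powr (real CARD('d) + \<alpha>)"
  define e where "e x = (\<Sum>z\<in>S - {x}. bond_energy W \<omega> \<alpha> f x z)" for x
  define Q where "Q = (\<Sum>x\<in>S. \<Sum>y\<in>S - {x}. (f x - f y)^2)"
  have N: "0 < N"
    using assms(1,2) by (simp add: N_def card_gt_0_iff)
  have sum_e: "0 \<le> sum e S"
    unfolding e_def using W_nonneg by (intro sum_nonneg bond_energy_nonneg) auto
  have "\<kappa> * N * Q = (\<Sum>x\<in>S. \<Sum>y\<in>S - {x}. \<kappa> * N * (f x - f y)^2)"
    unfolding Q_def by (simp add: sum_distrib_left)
  also have "\<dots> \<le> (\<Sum>x\<in>S. \<Sum>y\<in>S - {x}. c * (e x + e y))"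
  proof (intro sum_mono)
    fix x y assume "x \<in> S" "y \<in> S - {x}"
    then have "\<kappa> * N * (f x - f y)^2 \<le> common_heavy_neighbours W \<omega> S x y * (f x - f y)^2"
      using many unfolding N_def by (intro mult_right_mono) auto
    also have "\<dots> \<le> c * (e x + e y)"
      unfolding c_def e_def using \<open>x \<in> S\<close> \<open>y \<in> S - {x}\<close> assms
      by (intro sq_diff_le_common_heavy_neighbours) auto
    finally show "\<kappa> * N * (f x - f y)^2 \<le> c * (e x + e y)" .
  qed
  also have "\<dots> = c * (2 * (N - 1) * sum e S)"
    using sum_offdiag_add[OF \<open>finite S\<close>, of e] by (simp add: N_def sum_distrib_left[symmetric])
  also have "\<dots> \<le> c * (2 * N * sum e S)"
    using sum_e by (intro mult_left_mono mult_right_mono) (auto simp: c_def)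
  also have "\<dots> = \<kappa> * N * (16 * D powr (real CARD('d) + \<alpha>) * energy S W \<omega> \<alpha> f / \<kappa>)"
    using \<open>0 < \<kappa>\<close> by (simp add: energy_eq_sum_bond_energy c_def e_def)
  finally have "Q \<le> 16 * D powr (real CARD('d) + \<alpha>) * energy S W \<omega> \<alpha> f / \<kappa>"
    by (rule mult_left_le_imp_le) (use \<open>0 < \<kappa>\<close> N in auto)
  then have "Q / (2 * N^2) \<le> 8 * D powr (real CARD('d) + \<alpha>) / (\<kappa> * N^2) * energy S W \<omega> \<alpha> f"
    using N by (simp add: divide_right_mono field_simps)
  then show ?thesis
    unfolding empirical_variance_eq_sum_sq_diff[OF assms(1,2)] Q_def N_def .
qed

lemma poincare_zbox:
  fixes y :: "int^'d"
  assumes "1 \<le> r" "0 < \<kappa>" "0 < \<alpha>"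
    and W_nonneg: "\<And>u v. u \<in> zbox r y \<Longrightarrow> v \<in> zbox r y \<Longrightarrow> u \<noteq> v \<Longrightarrow> 0 \<le> W {u, v} \<omega>"
    and many: "\<And>x z. x \<in> zbox r y \<Longrightarrow> z \<in> zbox r y \<Longrightarrow> x \<noteq> z
                 \<Longrightarrow> \<kappa> * real (card (zbox r y)) \<le> common_heavy_neighbours W \<omega> (zbox r y) x z"
  shows "empirical_variance (zbox r y) f
       \<le> 8 * (2 * sqrt (real CARD('d))) powr (real CARD('d) + \<alpha>) / \<kappa> * r powr (\<alpha> - real CARD('d))
           * energy (zbox r y) W \<omega> \<alpha> f"
proof -
  define S where "S = zbox r y"
  define s where "s = real CARD('d) + \<alpha>"
  define N where "N = real (card S)"
  have "r ^ CARD('d) \<le> N"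
    unfolding N_def S_def using assms(1) by (intro power_le_card_zbox) simp
  moreover have "0 < r ^ CARD('d)"
    using assms(1) by simp
  ultimately have "0 < N" "S \<noteq> {}"
    unfolding N_def by auto
  have "r powr (2 * real CARD('d)) = r ^ (CARD('d) * 2)"
    using assms(1) by (subst powr_realpow[symmetric]) (auto simp: mult.commute)
  also have "\<dots> \<le> N^2"
    unfolding power_mult using \<open>r ^ CARD('d) \<le> N\<close> \<open>0 < r ^ CARD('d)\<close> by (intro power_mono) auto
  finally have N: "r powr (2 * real CARD('d)) \<le> N^2" .
  have "8 * (2 * r * sqrt (real CARD('d))) powr s / (\<kappa> * N^2)
      = 8 * (2 * sqrt (real CARD('d))) powr s / \<kappa> * (r powr s / N^2)"
    using assms(1) by (simp add: powr_mult[symmetric] mult_ac)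
  also have "\<dots> \<le> 8 * (2 * sqrt (real CARD('d))) powr s / \<kappa>
                    * (r powr s / r powr (2 * real CARD('d)))"
    using N \<open>0 < N\<close> assms(1,2) by (intro mult_left_mono divide_left_mono) auto
  also have "r powr s / r powr (2 * real CARD('d)) = r powr (\<alpha> - real CARD('d))"
    unfolding s_def using assms(1) by (simp add: powr_diff[symmetric])
  finally have coeff: "8 * (2 * r * sqrt (real CARD('d))) powr s / (\<kappa> * N^2)
      \<le> 8 * (2 * sqrt (real CARD('d))) powr s / \<kappa> * r powr (\<alpha> - real CARD('d))" .
  have "empirical_variance S f
      \<le> 8 * (2 * r * sqrt (real CARD('d))) powr s / (\<kappa> * N^2) * energy S W \<omega> \<alpha> f"
    unfolding N_def s_def using finite_zbox \<open>S \<noteq> {}\<close> assms zdist_le_zbox[of _ r y]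
    by (intro poincare_of_common_heavy_neighbours) (auto simp: S_def)
  also have "\<dots> \<le> 8 * (2 * sqrt (real CARD('d))) powr s / \<kappa> * r powr (\<alpha> - real CARD('d))
                    * energy S W \<omega> \<alpha> f"
    using coeff W_nonneg unfolding S_def by (intro mult_right_mono energy_nonneg) auto
  finally show ?thesis
    unfolding S_def N_def s_def .
qed

section \<open>Random conductances\<close>

lemma upairsI: "x \<noteq> z \<Longrightarrow> {x, z} \<in> upairs"
  unfolding upairs_def by blast

lemma borel_measurable_heavy [measurable]:
  "indicator {1/2..} \<in> (borel_measurable borel :: (real \<Rightarrow> real) set)"
  by measurable

definition poorly_connected ::
    "'a measure \<Rightarrow> ((int^'d) set \<Rightarrow> 'a \<Rightarrow> real) \<Rightarrow> real \<Rightarrow> (int^'d) set \<Rightarrow> 'a set" where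
  "poorly_connected M W \<kappa> S = {\<omega> \<in> space M. \<exists>x\<in>S. \<exists>y\<in>S. x \<noteq> y \<and>
     common_heavy_neighbours W \<omega> S x y < \<kappa> * real (card S)}"

lemma exp_hoeffding_exponent_le:
  fixes q N :: real
  assumes "4 \<le> N"
  shows "exp (-2 * (q * (N - 2) / 2)^2 / (N - 2)) \<le> exp (- (q^2 / 4) * N)"
proof -
  have "-2 * (q * (N - 2) / 2)^2 / (N - 2) = - (q^2 / 2) * (N - 2)"
    using assms by (simp add: power2_eq_square field_simps)
  moreover have "q^2 / 4 * N \<le> q^2 / 4 * (2 * (N - 2))"
    using assms by (intro mult_left_mono) auto
  ultimately show ?thesis
    by (simp add: algebra_simps)
qed

locale random_conductances = prob_space M for M :: "'a measure" +
  fixes W :: "(int^'d) set \<Rightarrow> 'a \<Rightarrow> real" and B :: real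
  assumes indep_conductances: "indep_vars (\<lambda>_. borel) W upairs"
    and conductance_bounded: "\<And>e \<omega>. e \<in> upairs \<Longrightarrow> \<omega> \<in> space M \<Longrightarrow> 0 \<le> W e \<omega> \<and> W e \<omega> \<le> B"
    and conductance_mean: "\<And>e. e \<in> upairs \<Longrightarrow> expectation (W e) = 1"
begin

abbreviation heavy :: "(int^'d) set \<Rightarrow> 'a \<Rightarrow> real" where
  "heavy e \<omega> \<equiv> indicator {1/2..} (W e \<omega>)"

lemma conductance_measurable: "e \<in> upairs \<Longrightarrow> W e \<in> borel_measurable M"
  using indep_conductances unfolding indep_vars_def by auto

lemma heavy_measurable: "e \<in> upairs \<Longrightarrow> heavy e \<in> borel_measurable M"
  using measurable_compose[OF conductance_measurable borel_measurable_heavy] by (simp add: comp_def)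

lemma heavy_integrable: "e \<in> upairs \<Longrightarrow> integrable M (heavy e)"
  by (intro integrable_const_bound[where B=1] AE_I2 heavy_measurable) (simp split: split_indicator)

lemma conductance_integrable: "e \<in> upairs \<Longrightarrow> integrable M (W e)"
  using conductance_bounded
  by (intro integrable_const_bound[where B=B] AE_I2 conductance_measurable) auto

lemma bound_ge_one: "1 \<le> B"
proof -
  have e: "{0, 1} \<in> (upairs :: (int^'d) set set)"
    by (rule upairsI) simp
  have "expectation (W {0, 1}) \<le> B"
    using conductance_bounded[OF e]
    by (intro integral_le_const conductance_integrable[OF e] AE_I2) auto
  then show ?thesis
    using conductance_mean[OF e] by simp
qed

lemma expectation_heavy_ge:
  assumes "e \<in> upairs"
  shows "1 / (2 * B) \<le> expectation (heavy e)"
proof -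
  define q where "q = expectation (heavy e)"
  have "W e \<omega> \<le> 1/2 + B * heavy e \<omega>" if "\<omega> \<in> space M" for \<omega>
    using conductance_bounded[OF assms that] by (simp split: split_indicator)
  then have "expectation (W e) \<le> expectation (\<lambda>\<omega>. 1/2 + B * heavy e \<omega>)"
    using heavy_integrable[OF assms] conductance_integrable[OF assms] by (intro integral_mono) auto
  also have "\<dots> = 1/2 + B * q"
    using heavy_integrable[OF assms] by (simp add: q_def prob_space)
  finally have "1 \<le> 2 * B * q"
    using conductance_mean[OF assms] by simp
  moreover have "0 < 2 * B"
    using bound_ge_one by simp
  ultimately show ?thesis
    unfolding q_def[symmetric] by (simp only: pos_divide_le_eq mult.commute)
qed

lemma common_heavy_neighbours_measurable:
  "(\<lambda>\<omega>. common_heavy_neighbours W \<omega> S x y) \<in> borel_measurable M"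
  unfolding common_heavy_neighbours_def
  by (intro borel_measurable_sum borel_measurable_times heavy_measurable upairsI) auto

lemma expectation_common_heavy_ge:
  assumes "x \<noteq> y" "z \<noteq> x" "z \<noteq> y"
  shows "(1 / (2 * B))^2 \<le> expectation (\<lambda>\<omega>. heavy {x, z} \<omega> * heavy {z, y} \<omega>)"
proof -
  have e: "{x, z} \<in> upairs" "{z, y} \<in> upairs" "{x, z} \<noteq> {z, y}"
    using assms by (auto intro!: upairsI simp: doubleton_eq_iff)
  have indep: "indep_vars (\<lambda>_. borel) heavy {{x, z}, {z, y}}"
    using e by (intro indep_vars_subset[OF indep_vars_compose2[OF indep_conductances]]) auto
  have "expectation (\<lambda>\<omega>. \<Prod>e\<in>{{x, z}, {z, y}}. heavy e \<omega>)
      = (\<Prod>e\<in>{{x, z}, {z, y}}. expectation (heavy e))"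
    by (rule indep_vars_lebesgue_integral[OF _ indep]) (use e heavy_integrable in auto)
  then have "expectation (\<lambda>\<omega>. heavy {x, z} \<omega> * heavy {z, y} \<omega>)
      = expectation (heavy {x, z}) * expectation (heavy {z, y})"
    using e(3) by simp
  moreover have "1 / (2 * B) * (1 / (2 * B))
      \<le> expectation (heavy {x, z}) * expectation (heavy {z, y})"
    using e expectation_heavy_ge bound_ge_one
    by (intro mult_mono) (auto intro!: integral_nonneg_AE)
  ultimately show ?thesis
    by (simp add: power2_eq_square)
qed

lemma indep_common_heavy:
  assumes "x \<noteq> y" "x \<notin> Z" "y \<notin> Z"
  shows "indep_vars (\<lambda>_. borel) (\<lambda>z \<omega>. heavy {x, z} \<omega> * heavy {z, y} \<omega>) Z"
proof -
  define K where "K z = {{x, z}, {z, y}}" for z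
  define g where
    "g z v = (indicator {1/2..} (v {x, z}) * indicator {1/2..} (v {z, y}) :: real)"
    for z and v :: "(int^'d) set \<Rightarrow> real"
  have "indep_vars (\<lambda>z. PiM (K z) (\<lambda>_. borel)) (\<lambda>z \<omega>. restrict (\<lambda>e. W e \<omega>) (K z)) Z"
  proof (rule indep_vars_restrict[OF indep_conductances])
    show "K z \<subseteq> upairs" if "z \<in> Z" for z
      using that assms by (auto simp: K_def intro!: upairsI)
    show "disjoint_family_on K Z"
      using assms unfolding disjoint_family_on_def K_def by (auto simp: doubleton_eq_iff)
  qed
  then have "indep_vars (\<lambda>_. borel) (\<lambda>z \<omega>. g z (restrict (\<lambda>e. W e \<omega>) (K z))) Z"
  proof (rule indep_vars_compose2)
    fix z
    have "(\<lambda>v. v e) \<in> borel_measurable (PiM (K z) (\<lambda>_. borel))" if "e \<in> K z" for e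
      using that by (rule measurable_component_singleton)
    then show "g z \<in> borel_measurable (PiM (K z) (\<lambda>_. borel))"
      unfolding g_def K_def by measurable
  qed
  then show ?thesis
    by (simp add: g_def K_def)
qed

lemma prob_few_common_heavy_neighbours:
  assumes "finite S" "x \<in> S" "y \<in> S" "x \<noteq> y" "4 \<le> card S"
  shows "prob {\<omega> \<in> space M. common_heavy_neighbours W \<omega> S x y < (1 / (2 * B))^2 / 4 * real (card S)}
       \<le> exp (- ((1 / (2 * B))^4 / 4) * real (card S))"
proof -
  define p where "p = 1 / (2 * B)"
  define N where "N = real (card S)"
  define Z where "Z = S - {x, y}"
  define X where "X z \<omega> = heavy {x, z} \<omega> * heavy {z, y} \<omega>" for z \<omega>
  define \<mu> where "\<mu> = (\<Sum>z\<in>Z. expectation (X z))"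
  define \<epsilon> where "\<epsilon> = p^2 * (N - 2) / 2"
  have N: "4 \<le> N" and card_Z: "real (card Z) = N - 2"
    using assms by (simp_all add: N_def Z_def card_Diff_subset of_nat_diff)
  have "p^2 * (N - 2) = (\<Sum>z\<in>Z. p^2)"
    using card_Z by simp
  also have "\<dots> \<le> \<mu>"
    unfolding \<mu>_def X_def p_def Z_def using assms(4)
    by (intro sum_mono expectation_common_heavy_ge) auto
  finally have \<mu>: "p^2 * (N - 2) \<le> \<mu>" .
  interpret Hoeffding_ineq M Z X "\<lambda>_. 0" "\<lambda>_. 1" \<mu>
  proof unfold_locales
    show "finite Z" "indep_vars (\<lambda>_. borel) X Z"
      using assms unfolding Z_def X_def by (auto intro: indep_common_heavy)
    show "AE \<omega> in M. X z \<omega> \<in> {0..1}" for z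
      unfolding X_def by (intro AE_I2) (simp split: split_indicator)
  qed (simp add: \<mu>_def)
  have "p^2 * N \<le> p^2 * (2 * (N - 2))"
    using N by (intro mult_left_mono) auto
  then have "p^2 / 4 * N \<le> \<mu> - \<epsilon>"
    using \<mu> unfolding \<epsilon>_def by linarith
  then have "{\<omega> \<in> space M. common_heavy_neighbours W \<omega> S x y < p^2 / 4 * N}
      \<subseteq> {\<omega> \<in> space M. (\<Sum>z\<in>Z. X z \<omega>) \<le> \<mu> - \<epsilon>}"
    unfolding common_heavy_neighbours_def X_def Z_def by auto
  then have "prob {\<omega> \<in> space M. common_heavy_neighbours W \<omega> S x y < p^2 / 4 * N}
      \<le> prob {\<omega> \<in> space M. (\<Sum>z\<in>Z. X z \<omega>) \<le> \<mu> - \<epsilon>}"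
    by (intro finite_measure_mono) measurable
  also have "\<dots> \<le> exp (-2 * \<epsilon>^2 / (\<Sum>z\<in>Z. (1 - 0)^2))"
    using N card_Z by (intro Hoeffding_ineq_le) (auto simp: \<epsilon>_def)
  also have "\<dots> \<le> exp (- ((p^2)^2 / 4) * N)"
    using exp_hoeffding_exponent_le[OF N, of "p^2"] card_Z by (simp add: \<epsilon>_def)
  also have "(p^2)^2 = p^4"
    by (simp flip: power_mult)
  finally show ?thesis
    unfolding p_def N_def .
qed

end

lemma (in prob_space) borel_cantelli_threshold:
  fixes a :: real
  assumes "\<And>n. E n \<in> events" "summable (\<lambda>n. prob (E n))"
  obtains R0 :: "'a \<Rightarrow> ereal"
  where "R0 \<in> borel_measurable M" "\<And>\<omega>. ereal a \<le> R0 \<omega>" "AE \<omega> in M. R0 \<omega> < \<infinity>"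
    "\<And>n \<omega>. R0 \<omega> < ereal (real n + a) \<Longrightarrow> \<omega> \<notin> E n"
proof
  define R0 where "R0 \<omega> = (SUP n. ereal (if \<omega> \<in> E n then real n + a else a))" for \<omega>
  show "R0 \<in> borel_measurable M"
    unfolding R0_def using assms(1) by measurable
  show "ereal a \<le> R0 \<omega>" for \<omega>
    unfolding R0_def by (rule SUP_upper2[of 0]) auto
  show "\<omega> \<notin> E n" if "R0 \<omega> < ereal (real n + a)" for n \<omega>
    using that SUP_upper[of n UNIV "\<lambda>n. ereal (if \<omega> \<in> E n then real n + a else a)"]
    unfolding R0_def by auto
  have "AE \<omega> in M. eventually (\<lambda>n. \<omega> \<in> space M - E n) sequentially"
    using assms by (intro borel_cantelli_AE1) (auto simp: emeasure_eq_measure)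
  then show "AE \<omega> in M. R0 \<omega> < \<infinity>"
  proof eventually_elim
    case (elim \<omega>)
    then obtain N where "\<And>n. N \<le> n \<Longrightarrow> \<omega> \<notin> E n"
      unfolding eventually_sequentially by blast
    then have "R0 \<omega> \<le> ereal (real N + a)"
      unfolding R0_def by (intro SUP_least) (fastforce simp: not_le[symmetric] intro: less_imp_le)
    then show ?case
      using order_le_less_trans by fastforce
  qed
qed

context random_conductances
begin

lemma poorly_connected_eq_UN:
  "poorly_connected M W \<kappa> S = (\<Union>p\<in>{p \<in> S \<times> S. fst p \<noteq> snd p}.
     {\<omega> \<in> space M. common_heavy_neighbours W \<omega> S (fst p) (snd p) < \<kappa> * real (card S)})"
  unfolding poorly_connected_def by (auto; blast)

lemma poorly_connected_sets: "finite S \<Longrightarrow> poorly_connected M W \<kappa> S \<in> events"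
  unfolding poorly_connected_eq_UN using common_heavy_neighbours_measurable
  by (intro sets.finite_UN) (auto intro: finite_subset[of _ "S \<times> S"])

lemma prob_poorly_connected_le:
  assumes "finite S" "4 \<le> card S"
  shows "prob (poorly_connected M W ((1 / (2 * B))^2 / 4) S)
       \<le> real (card S)^2 * exp (- ((1 / (2 * B))^4 / 4) * real (card S))"
proof -
  define P where "P = {p \<in> S \<times> S. fst p \<noteq> snd p}"
  have "finite P" "card P \<le> card S ^ 2"
    using assms(1) card_mono[of "S \<times> S" P]
    by (auto simp: P_def card_cartesian_product power2_eq_square intro: finite_subset[of _ "S \<times> S"])
  have "prob (poorly_connected M W ((1 / (2 * B))^2 / 4) S)
      \<le> (\<Sum>p\<in>P. prob {\<omega> \<in> space M. common_heavy_neighbours W \<omega> S (fst p) (snd p)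
                          < (1 / (2 * B))^2 / 4 * real (card S)})"
    unfolding poorly_connected_eq_UN P_def[symmetric]
    using \<open>finite P\<close> common_heavy_neighbours_measurable
    by (intro measure_UNION_le) auto
  also have "\<dots> \<le> (\<Sum>p\<in>P. exp (- ((1 / (2 * B))^4 / 4) * real (card S)))"
    using assms unfolding P_def by (intro sum_mono prob_few_common_heavy_neighbours) auto
  also have "\<dots> \<le> real (card S)^2 * exp (- ((1 / (2 * B))^4 / 4) * real (card S))"
    using \<open>card P \<le> card S ^ 2\<close> by (simp add: mult_right_mono flip: of_nat_power)
  finally show ?thesis .
qed

lemma prob_poorly_connected_boxes_le:
  assumes "4 \<le> m"
  shows "prob (\<Union>S\<in>box_family m n. poorly_connected M W ((1 / (2 * B))^2 / 4) S)
       \<le> real (2 * n + 3) ^ (3 * CARD('d) + 2)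
           * exp (- ((1 / (2 * B))^4 / 4) * real_of_int m ^ CARD('d))"
proof -
  define c where "c = (1 / (2 * B))^4 / 4"
  define T where "T = real (2 * n + 3)"
  have each: "prob (poorly_connected M W ((1 / (2 * B))^2 / 4) S)
      \<le> (T ^ CARD('d))^2 * exp (- c * real_of_int m ^ CARD('d))" if "S \<in> box_family m n" for S
  proof -
    have card: "real_of_int m ^ CARD('d) \<le> real (card S)" "real (card S) \<le> T ^ CARD('d)"
      using card_mem_box_family[OF that] assms unfolding T_def by auto
    have "(4::real) \<le> real_of_int m ^ 1"
      using assms by simp
    also have "\<dots> \<le> real_of_int m ^ CARD('d)"
      using assms by (intro power_increasing) (auto simp: Suc_le_eq)
    finally have "(4::real) \<le> real_of_int m ^ CARD('d)" .
    then have "4 \<le> card S"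
      using card(1) by linarith
    then have "prob (poorly_connected M W ((1 / (2 * B))^2 / 4) S)
        \<le> real (card S)^2 * exp (- c * real (card S))"
      unfolding c_def using that finite_lattice_box
      by (intro prob_poorly_connected_le) (auto simp: box_family_def)
    also have "\<dots> \<le> (T ^ CARD('d))^2 * exp (- c * real_of_int m ^ CARD('d))"
      using card by (intro mult_mono power_mono) (auto simp: c_def intro!: mult_left_mono)
    finally show ?thesis .
  qed
  have "prob (\<Union>S\<in>box_family m n. poorly_connected M W ((1 / (2 * B))^2 / 4) S)
      \<le> (\<Sum>S\<in>box_family m n. prob (poorly_connected M W ((1 / (2 * B))^2 / 4) S))"
    using finite_box_family by (intro measure_UNION_le poorly_connected_sets)
      (auto simp: box_family_def finite_lattice_box)
  also have "\<dots> \<le> real (card (box_family m n :: (int^'d) set set))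
                    * ((T ^ CARD('d))^2 * exp (- c * real_of_int m ^ CARD('d)))"
    using sum_mono[OF each] by simp
  also have "\<dots> \<le> T ^ (CARD('d) + 2) * ((T ^ CARD('d))^2 * exp (- c * real_of_int m ^ CARD('d)))"
    using card_box_family_le[of m n] assms unfolding T_def by (intro mult_right_mono) auto
  also have "\<dots> = T ^ (3 * CARD('d) + 2) * exp (- c * real_of_int m ^ CARD('d))"
  proof -
    have "T ^ (CARD('d) + 2) * (T ^ CARD('d))^2 = T ^ (3 * CARD('d) + 2)"
      unfolding power_mult[symmetric] power_add[symmetric] by (simp add: algebra_simps)
    then show ?thesis
      by (simp only: mult.assoc[symmetric])
  qed
  finally show ?thesis
    unfolding T_def c_def .
qed

lemma summable_prob_poorly_connected_boxes:
  assumes "1 < \<theta> * real CARD('d)"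
  shows "summable (\<lambda>n. prob (\<Union>S\<in>box_family \<lfloor>ln (real n) powr \<theta>\<rfloor> n.
                              poorly_connected M W ((1 / (2 * B))^2 / 4) S))"
proof (rule summable_comparison_test_ev)
  show "summable (\<lambda>n. inverse (real n ^ 2))"
    by (rule inverse_power_summable) simp
  have "0 < (1 / (2 * B))^4 / 4"
    using bound_ge_one by simp
  with assms have "eventually (\<lambda>n. 4 \<le> \<lfloor>ln (real n) powr \<theta>\<rfloor> \<and>
      real (2 * n + 3) ^ (3 * CARD('d) + 2)
        * exp (- ((1 / (2 * B))^4 / 4) * real_of_int \<lfloor>ln (real n) powr \<theta>\<rfloor> ^ CARD('d))
      \<le> inverse (real n ^ 2)) sequentially"
    by (intro eventually_log_scale_tail)
  then show "eventually (\<lambda>n. norm (prob (\<Union>S\<in>box_family \<lfloor>ln (real n) powr \<theta>\<rfloor> n.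
      poorly_connected M W ((1 / (2 * B))^2 / 4) S)) \<le> inverse (real n ^ 2)) sequentially"
  proof eventually_elim
    case (elim n)
    then show ?case
      using prob_poorly_connected_boxes_le[of "\<lfloor>ln (real n) powr \<theta>\<rfloor>" n] by simp
  qed
qed

lemma poincare_not_poorly_connected:
  fixes y :: "int^'d"
  assumes "\<omega> \<in> space M" "\<omega> \<notin> poorly_connected M W \<kappa> (zbox r y)" "1 \<le> r" "0 < \<kappa>" "0 < \<alpha>"
  shows "empirical_variance (zbox r y) f
       \<le> 8 * (2 * sqrt (real CARD('d))) powr (real CARD('d) + \<alpha>) / \<kappa> * r powr (\<alpha> - real CARD('d))
           * energy (zbox r y) W \<omega> \<alpha> f"
  using assms conductance_bounded[OF upairsI]
  by (intro poincare_zbox) (auto simp: poorly_connected_def not_less)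

lemma poincare_at_log_scales:
  assumes "1 < \<theta> * real CARD('d)" "0 < \<alpha>"
  shows "\<exists>R0 :: 'a \<Rightarrow> ereal. R0 \<in> borel_measurable M \<and> (\<forall>\<omega>\<in>space M. 1 \<le> R0 \<omega>)
    \<and> (AE \<omega> in M. R0 \<omega> < \<infinity>)
    \<and> (AE \<omega> in M. \<forall>(f :: int^'d \<Rightarrow> real) R y r.
          ereal R > R0 \<omega> \<and> y \<in> zbox R 0 \<and> ln R powr \<theta> \<le> r \<and> r \<le> R \<longrightarrow>
          empirical_variance (zbox r y) f
          \<le> 8 * (2 * sqrt (real CARD('d))) powr (real CARD('d) + \<alpha>) / ((1 / (2 * B))^2 / 4)
              * r powr (\<alpha> - real CARD('d)) * energy (zbox r y) W \<omega> \<alpha> f)"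
proof -
  define \<kappa> where "\<kappa> = (1 / (2 * B))^2 / 4"
  define E where "E n = (\<Union>S\<in>box_family \<lfloor>ln (real n) powr \<theta>\<rfloor> n. poorly_connected M W \<kappa> S)" for n
  have "0 < \<kappa>"
    using bound_ge_one by (simp add: \<kappa>_def)
  have "0 < \<theta>"
    using assms(1) mult_nonpos_nonneg[of \<theta> "real CARD('d)"] by fastforce
  have "E n \<in> events" for n
    unfolding E_def using finite_box_family
    by (intro sets.finite_UN poorly_connected_sets) (auto simp: box_family_def finite_lattice_box)
  moreover have "summable (\<lambda>n. prob (E n))"
    unfolding E_def \<kappa>_def using assms(1) by (rule summable_prob_poorly_connected_boxes)
  ultimately obtain R0 where R0: "R0 \<in> borel_measurable M" "\<And>\<omega>. ereal 3 \<le> R0 \<omega>"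
    "AE \<omega> in M. R0 \<omega> < \<infinity>" "\<And>n \<omega>. R0 \<omega> < ereal (real n + 3) \<Longrightarrow> \<omega> \<notin> E n"
    by (rule borel_cantelli_threshold[where a=3]) blast
  have "empirical_variance (zbox r y) f
      \<le> 8 * (2 * sqrt (real CARD('d))) powr (real CARD('d) + \<alpha>) / \<kappa>
          * r powr (\<alpha> - real CARD('d)) * energy (zbox r y) W \<omega> \<alpha> f"
    if \<omega>: "\<omega> \<in> space M" and R: "R0 \<omega> < ereal R"
      and scale: "y \<in> zbox R 0" "ln R powr \<theta> \<le> r" "r \<le> R" for \<omega> f R r and y :: "int^'d"
  proof -
    have "3 < R"
      using R0(2)[of \<omega>] R by (metis less_ereal.simps(1) order_le_less_trans)
    have "R \<le> real (nat \<lfloor>R\<rfloor>) + 3"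
      using \<open>3 < R\<close> by linarith
    then have "\<omega> \<notin> E (nat \<lfloor>R\<rfloor>)"
      using order_less_le_trans[OF R, of "ereal (real (nat \<lfloor>R\<rfloor>) + 3)"] by (intro R0(4)) simp
    then have "\<omega> \<notin> poorly_connected M W \<kappa> (zbox r y)"
      unfolding E_def using zbox_mem_box_family_at_scale[OF \<open>3 < R\<close> \<open>0 < \<theta>\<close> scale] by blast
    with \<omega> show ?thesis
      using one_le_log_scale[OF \<open>3 < R\<close> \<open>0 < \<theta>\<close> scale(2)] \<open>0 < \<kappa>\<close> assms(2)
      by (rule poincare_not_poorly_connected)
  qed
  moreover have "1 \<le> R0 \<omega>" for \<omega>
    by (rule order_trans[OF _ R0(2)]) simp
  ultimately show ?thesis
    unfolding \<kappa>_def by (intro exI[of _ R0] conjI ballI R0(1,3) AE_I2 allI impI) auto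
qed

end

theorem proposition2p2:
  fixes P :: "'a measure"
    and W :: "(int^'d) set \<Rightarrow> 'a \<Rightarrow> real"
    and M :: real and \<alpha> :: real
  assumes "prob_space P"
    and "\<forall>e\<in>upairs. W e \<in> borel_measurable P"
    and "prob_space.indep_vars P (\<lambda>_. borel) W upairs"
    and "\<forall>e\<in>upairs. \<forall>e'\<in>upairs. distr P borel (W e) = distr P borel (W e')"
    and "\<forall>e\<in>upairs. \<forall>\<omega>\<in>space P. 0 \<le> W e \<omega> \<and> W e \<omega> \<le> M"
    and "\<forall>e\<in>upairs. integral\<^sup>L P (W e) = 1"
    and "M > 0"
    and "0 < \<alpha>" and "\<alpha> < 2"
  shows "\<exists>C1>0. \<forall>\<theta>::real. \<theta> > 1 / real CARD('d) \<longrightarrow>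
    (\<exists>R0 :: 'a \<Rightarrow> ereal. R0 \<in> borel_measurable P \<and> (\<forall>\<omega>\<in>space P. 1 \<le> R0 \<omega>)
      \<and> (AE \<omega> in P. R0 \<omega> < \<infinity>)
      \<and> (AE \<omega> in P. \<forall>(f :: int^'d \<Rightarrow> real) (R::real) y (r::real).
            ereal R > R0 \<omega> \<and> y \<in> zbox R 0 \<and> (ln R) powr \<theta> \<le> r \<and> r \<le> R \<longrightarrow>
            (\<Sum>x\<in>zbox r y. (f x)^2) / real (card (zbox r y))
              - ((\<Sum>x\<in>zbox r y. f x) / real (card (zbox r y)))^2
            \<le> C1 * r powr (\<alpha> - real CARD('d)) * energy (zbox r y) W \<omega> \<alpha> f))"
proof -
  interpret random_conductances P W M
    using assms(1,3,5,6)
    by (intro random_conductances.intro random_conductances_axioms.intro) simp_all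
  have "0 < 8 * (2 * sqrt (real CARD('d))) powr (real CARD('d) + \<alpha>) / ((1 / (2 * M))^2 / 4)"
    using assms(7) by simp
  moreover have "1 < \<theta> * real CARD('d)" if "1 / real CARD('d) < \<theta>" for \<theta>
    using that by (simp add: divide_less_eq)
  ultimately show ?thesis
    unfolding empirical_variance_def[symmetric] using poincare_at_log_scales assms(8) by blast
qed

end
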